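(* Let $|\Psi^{RQ}\rangle$ be a pure state on $\mathcal{H}_R\otimes\mathcal{H}_Q$, with $d=\dim\mathcal{H}_Q$, and let a noisy channel (CPTP map) $\mathcal{E}^Q$ from $Q$ to $Q$ act on $Q$, realized by a unitary $U^{QE}$ acting on $Q$ and an environment $E$ initially in a pure state $|E\rangle$, producing the pure state $\rho^{RQ'E'}$. Let Alice encode classical information in an ensemble $\{p_k,\rho_k^Q\}$ with $\sum_k p_k\rho_k^Q=\rho^Q=\mathrm{Tr}_R|\Psi^{RQ}\rangle\langle\Psi^{RQ}|$, and let $H_{Eve}$ be the classical information Eve obtains, which satisfies $H_{Eve}\le\chi^{E'}$. Then $$I_c(A\rangle B)+H_{Eve}\le \log d .$$
   Context: Notation: $S$ is von Neumann entropy. Bob receives $\rho_k^{Q'}=\mathcal{E}^Q(\rho_k^Q)$ and $\rho^{Q'}=\mathcal{E}^Q(\rho^Q)$; Eve (the environment) holds $\rho_k^{E'}$, $\rho^{E'}$, the corresponding reduced states of the environment after the unitary interaction. Holevo quantities: $\chi^{Q'}=S(\rho^{Q'})-\sum_k p_kS(\rho_k^{Q'})$ and $\chi^{E'}=S(\rho^{E'})-\sum_kp_kS(\rho_k^{E'})$. The coherent information is $I_c(A\rangle B)=I_c(R\rangle Q')=S(\rho^{Q'})-S(\rho^{RQ'})$, where $\rho^{RQ'}=(I^R\otimes\mathcal{E}^Q)(|\Psi^{RQ}\rangle\langle\Psi^{RQ}|)$. Standing convention of the framework (Schumacher–Westmoreland): the coherent information is identified with the difference of Holevo quantities, $I_c(A\rangle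 B)=\chi^{Q'}-\chi^{E'}$. *)

theory Defs
  imports "Jordan_Normal_Form.Matrix" "Jordan_Normal_Form.Char_Poly"
begin

definition adj :: "complex mat \<Rightarrow> complex mat" where
  "adj M = mat (dim_col M) (dim_row M) (\<lambda>(i,j). cnj (M $$ (j,i)))"

definition unitary_mat :: "nat \<Rightarrow> complex mat \<Rightarrow> bool" where
  "unitary_mat n U \<longleftrightarrow> U \<in> carrier_mat n n \<and> adj U * U = 1\<^sub>m n \<and> U * adj U = 1\<^sub>m n"

definition pure_vec :: "nat \<Rightarrow> complex vec \<Rightarrow> bool" where
  "pure_vec n v \<longleftrightarrow> v \<in> carrier_vec n \<and> (\<Sum>i<n. (cmod (v $ i))\<^sup>2) = 1"

definition ket_bra :: "complex vec \<Rightarrow> complex mat" where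
  "ket_bra v = mat (dim_vec v) (dim_vec v) (\<lambda>(i,j). v $ i * cnj (v $ j))"

definition mtrace :: "complex mat \<Rightarrow> complex" where
  "mtrace M = (\<Sum>i<dim_row M. M $$ (i,i))"

definition density_mat :: "nat \<Rightarrow> complex mat \<Rightarrow> bool" where
  "density_mat n \<rho> \<longleftrightarrow> \<rho> \<in> carrier_mat n n \<and> adj \<rho> = \<rho> \<and>
     (\<forall>v \<in> carrier_vec n. 0 \<le> Re (conjugate v \<bullet> (\<rho> *\<^sub>v v))) \<and> mtrace \<rho> = 1"

text \<open>Kronecker (tensor) product; index (i,k) of the product space is i * dim B + k.\<close>
definition kron :: "complex mat \<Rightarrow> complex mat \<Rightarrow> complex mat" where
  "kron A B = mat (dim_row A * dim_row B) (dim_col A * dim_col B)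
     (\<lambda>(i,j). A $$ (i div dim_row B, j div dim_col B) * B $$ (i mod dim_row B, j mod dim_col B))"

text \<open>Partial traces on C^a \<otimes> C^b: trace out the first (dim a) resp. second (dim b) factor.\<close>
definition ptrace_first :: "nat \<Rightarrow> nat \<Rightarrow> complex mat \<Rightarrow> complex mat" where
  "ptrace_first a b M = mat b b (\<lambda>(i,j). \<Sum>k<a. M $$ (k * b + i, k * b + j))"

definition ptrace_second :: "nat \<Rightarrow> nat \<Rightarrow> complex mat \<Rightarrow> complex mat" where
  "ptrace_second a b M = mat a a (\<lambda>(i,j). \<Sum>k<b. M $$ (i * b + k, j * b + k))"

definition eta :: "real \<Rightarrow> real" where
  "eta x = (if x \<le> 0 then 0 else - x * log 2 x)"

text \<open>S(rho) = - sum over eigenvalues (with multiplicity) of lambda log lambda;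
  the eigenvalues are the roots of the characteristic polynomial.\<close>
definition vN_entropy :: "complex mat \<Rightarrow> real" where
  "vN_entropy \<rho> = (\<Sum>a \<in> {a. poly (char_poly \<rho>) a = 0}.
      of_nat (order a (char_poly \<rho>)) * eta (Re a))"

definition dilate :: "nat \<Rightarrow> nat \<Rightarrow> complex mat \<Rightarrow> complex vec \<Rightarrow> complex mat \<Rightarrow> complex mat" where
  "dilate d dE U e \<rho> = U * kron \<rho> (ket_bra e) * adj U"

definition chan_out :: "nat \<Rightarrow> nat \<Rightarrow> complex mat \<Rightarrow> complex vec \<Rightarrow> complex mat \<Rightarrow> complex mat" where
  "chan_out d dE U e \<rho> = ptrace_second d dE (dilate d dE U e \<rho>)"

definition env_out :: "nat \<Rightarrow> nat \<Rightarrow> complex mat \<Rightarrow> complex vec \<Rightarrow> complex mat \<Rightarrow> complex mat" where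
  "env_out d dE U e \<rho> = ptrace_first d dE (dilate d dE U e \<rho>)"

definition ens_avg :: "nat \<Rightarrow> nat \<Rightarrow> (nat \<Rightarrow> real) \<Rightarrow> (nat \<Rightarrow> complex mat) \<Rightarrow> complex mat" where
  "ens_avg d n p \<rho> = mat d d (\<lambda>(i,j). \<Sum>k<n. complex_of_real (p k) * \<rho> k $$ (i,j))"

definition holevo :: "nat \<Rightarrow> (nat \<Rightarrow> real) \<Rightarrow> (nat \<Rightarrow> complex mat) \<Rightarrow> complex mat \<Rightarrow> real" where
  "holevo n p \<sigma> avg = vN_entropy avg - (\<Sum>k<n. p k * vN_entropy (\<sigma> k))"

text \<open>Coherent information I_c(R>Q') = S(rho^Q') - S(rho^RQ'), where
  rho^RQ' = Tr_E[(I_R \<otimes> U)(|Psi><Psi| \<otimes> |e><e|)(I_R \<otimes> U)^dagger] and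
  rho^Q' = E^Q(rho^Q) with rho^Q = Tr_R |Psi><Psi|.\<close>
definition coh_info :: "nat \<Rightarrow> nat \<Rightarrow> nat \<Rightarrow> complex vec \<Rightarrow> complex mat \<Rightarrow> complex vec \<Rightarrow> real" where
  "coh_info dR d dE \<Psi> U e =
     vN_entropy (chan_out d dE U e (ptrace_first dR d (ket_bra \<Psi>)))
   - vN_entropy (ptrace_second (dR * d) dE
        (kron (1\<^sub>m dR) U * kron (ket_bra \<Psi>) (ket_bra e) * adj (kron (1\<^sub>m dR) U)))"

end

theory Submission
  imports Defs "Jordan_Normal_Form.Schur_Decomposition"
begin

(* Under the Schumacher-Westmoreland convention, I_c + H_Eve <= (chi^Q' - chi^E') + chi^E' = chi^Q',
   so Eve's information cancels.  The Holevo quantity chi^Q' is at most S(rho^Q') because the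
   entropies S(rho_k^Q') are nonnegative, and S(rho^Q') <= log d because the eigenvalues of a
   d x d state form a probability vector of length d.  Both entropy bounds only use positivity
   and unit trace, which are preserved by ensemble averaging and by the dilated channel. *)

lemma eta_nonneg: "0 \<le> x \<Longrightarrow> x \<le> 1 \<Longrightarrow> 0 \<le> eta x"
  unfolding eta_def by (auto simp: mult_le_0_iff)

(* The tangent line of the concave function eta at 1/N. *)
lemma eta_le_tangent:
  assumes "0 \<le> x" "(1::real) \<le> N"
  shows "eta x \<le> (x * ln N + 1 / N - x) / ln 2"
proof (cases "x = 0")
  case True
  then show ?thesis using assms by (simp add: eta_def)
next
  case False
  then have x: "x > 0" using assms by simp
  have N: "N > 0" using assms by simp
  have "x * ln (1 / (N * x)) \<le> x * (1 / (N * x) - 1)"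
    using x N by (intro mult_left_mono ln_le_minus_one) auto
  moreover have "ln (1 / (N * x)) = - ln N - ln x" using x N by (simp add: ln_div ln_mult)
  moreover have "x * (1 / (N * x) - 1) = 1 / N - x" using x N by (simp add: field_simps)
  ultimately have "- (x * ln x) \<le> x * ln N + 1 / N - x" by (simp add: algebra_simps)
  then have "- (x * ln x) / ln 2 \<le> (x * ln N + 1 / N - x) / ln 2" by (intro divide_right_mono) auto
  then show ?thesis using x unfolding eta_def log_def by simp
qed

lemma sum_list_eta_nonneg:
  assumes "\<forall>y\<in>set ys. 0 \<le> y" and "sum_list ys = 1"
  shows "0 \<le> (\<Sum>y\<leftarrow>ys. eta y)"
proof -
  have "\<forall>y\<in>set ys. y \<le> 1" using assms by (metis member_le_sum_list)
  then show ?thesis using assms(1) by (intro sum_list_nonneg) (auto intro: eta_nonneg)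
qed

lemma sum_list_eta_le_log_length:
  assumes nonneg: "\<forall>y\<in>set ys. 0 \<le> y" and sum_one: "sum_list ys = 1"
  shows "(\<Sum>y\<leftarrow>ys. eta y) \<le> log 2 (real (length ys))"
proof -
  define N where "N = real (length ys)"
  have N: "1 \<le> N" using sum_one unfolding N_def by (cases ys) auto
  have "(\<Sum>y\<leftarrow>ys. eta y) \<le> (\<Sum>y\<leftarrow>ys. (y * ln N + 1 / N - y) / ln 2)"
    using nonneg N by (intro sum_list_mono eta_le_tangent) auto
  also have "\<dots> = (sum_list ys * ln N + N * (1 / N) - sum_list ys) / ln 2"
  proof -
    have "(\<Sum>y\<leftarrow>zs. (y * c + a - y) / b) = (sum_list zs * c + real (length zs) * a - sum_list zs) / b"
      for zs and a b c :: real
      by (induct zs) (simp_all add: add_divide_distrib diff_divide_distrib algebra_simps)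
    then show ?thesis unfolding N_def .
  qed
  also have "\<dots> = log 2 N" using N sum_one by (simp add: log_def)
  finally show ?thesis unfolding N_def .
qed

lemma order_prod_list_linear:
  "Polynomial.order a (\<Prod>b\<leftarrow>bs. [:- b, 1:]) = count_list bs (a::'a::idom)"
proof (induct bs)
  case (Cons b bs)
  have "Polynomial.order a (\<Prod>b\<leftarrow>b # bs. [:- b, 1:])
      = Polynomial.order a [:- b, 1:] + Polynomial.order a (\<Prod>b\<leftarrow>bs. [:- b, 1:])"
    unfolding list.map prod_list.Cons
    by (rule order_mult, simp only: mult_eq_0_iff prod_list_zero_iff) auto
  moreover have "Polynomial.order a [:- b, 1:] = (if a = b then 1 else 0)"
    using order_linear_power[of a "- b" 1] by auto
  ultimately show ?case using Cons by simp
qed simp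

lemma roots_prod_list_linear:
  "{a. poly (\<Prod>b\<leftarrow>bs. [:- b, 1:]) a = 0} = set (bs::'a::idom list)"
  by (auto simp: poly_prod_list prod_list_zero_iff)

lemma sum_list_map_eq_sum_of_count:
  "sum_list (map (f :: 'a \<Rightarrow> 'b::semiring_1) xs) = (\<Sum>x\<in>set xs. of_nat (count_list xs x) * f x)"
proof (induction xs)
  case (Cons x xs)
  show ?case
  proof (cases "x \<in> set xs")
    case True
    have rest: "(\<Sum>y\<in>set xs - {x}. of_nat (count_list (x # xs) y) * f y)
        = (\<Sum>y\<in>set xs - {x}. of_nat (count_list xs y) * f y)"
      by (intro sum.cong) auto
    show ?thesis
      using True Cons.IH rest by (simp add: sum.remove[of _ x] algebra_simps insert_absorb)
  next
    case False
    then have "\<forall>y\<in>set xs. x \<noteq> y" by blast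
    then show ?thesis using False Cons.IH by simp
  qed
qed simp

lemma vN_entropy_char_poly_linear:
  assumes "char_poly A = (\<Prod>b\<leftarrow>as. [:- b, 1:])"
  shows "vN_entropy A = (\<Sum>a\<leftarrow>as. eta (Re a))"
  unfolding vN_entropy_def assms roots_prod_list_linear order_prod_list_linear
  by (simp add: sum_list_map_eq_sum_of_count)

lemma mtrace_mult_comm:
  assumes "X \<in> carrier_mat n m" "Y \<in> carrier_mat m n"
  shows "mtrace (X * Y) = mtrace (Y * X)"
proof -
  have "mtrace (X * Y) = (\<Sum>i<n. \<Sum>j<m. X $$ (i,j) * Y $$ (j,i))"
    using assms unfolding mtrace_def by (auto simp: scalar_prod_def intro!: sum.cong)
  also have "\<dots> = (\<Sum>j<m. \<Sum>i<n. Y $$ (j,i) * X $$ (i,j))"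
    by (subst sum.swap) (simp add: mult.commute)
  also have "\<dots> = mtrace (Y * X)"
    using assms unfolding mtrace_def by (auto simp: scalar_prod_def intro!: sum.cong)
  finally show ?thesis .
qed

(* The Schur decomposition A = P B P^-1 has the eigenvalues on the diagonal of B. *)
lemma eigenvalue_list_sum_eq_mtrace:
  fixes A :: "complex mat"
  assumes A: "A \<in> carrier_mat n n"
  obtains as where "length as = n" "char_poly A = (\<Prod>b\<leftarrow>as. [:- b, 1:])" "sum_list as = mtrace A"
proof -
  obtain as where c: "char_poly A = (\<Prod>b\<leftarrow>as. [:- b, 1:])" and l: "length as = n"
    using char_poly_factorized[OF A] by blast
  obtain B P Q where sd: "schur_decomposition A as = (B,P,Q)" by (cases "schur_decomposition A as") auto
  from schur_decomposition[OF A c sd] have w: "similar_mat_wit A B P Q" and d: "diag_mat B = as"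
    by auto
  from w A have B: "B \<in> carrier_mat n n" and P: "P \<in> carrier_mat n n" and Q: "Q \<in> carrier_mat n n"
    and QP: "Q * P = 1\<^sub>m n" and eq: "A = P * B * Q"
    unfolding similar_mat_wit_def Let_def by auto
  have "mtrace A = mtrace (P * (B * Q))" using eq P B Q by (simp add: assoc_mult_mat)
  also have "\<dots> = mtrace ((B * Q) * P)" using P B Q by (intro mtrace_mult_comm) auto
  also have "(B * Q) * P = B" using B Q P QP by (simp add: assoc_mult_mat)
  also have "mtrace B = sum_list (diag_mat B)"
    using B unfolding mtrace_def diag_mat_def by (simp add: sum_list_sum_nth atLeast0LessThan)
  finally show ?thesis using that c l d by auto
qed

lemma eigenvalue_Re_nonneg:
  fixes M :: "complex mat"
  assumes M: "M \<in> carrier_mat n n"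
    and psd: "\<forall>v\<in>carrier_vec n. 0 \<le> Re (conjugate v \<bullet> (M *\<^sub>v v))"
    and root: "poly (char_poly M) a = 0"
  shows "0 \<le> Re a"
proof -
  have "eigenvalue M a" using eigenvalue_root_char_poly[OF M] root by simp
  then obtain v where v: "v \<in> carrier_vec n" "v \<noteq> 0\<^sub>v n" "M *\<^sub>v v = a \<cdot>\<^sub>v v"
    unfolding eigenvalue_def eigenvector_def using M by auto
  have pos: "conjugate v \<bullet> v > 0"
    using conjugate_square_greater_0_vec[OF v(1)] v(2) conjugate_vec_sprod_comm[OF v(1) v(1)] by simp
  have "0 \<le> Re (a * (conjugate v \<bullet> v))" using psd v by force
  moreover have "Im (conjugate v \<bullet> v) = 0" "Re (conjugate v \<bullet> v) > 0"
    using pos by (auto simp: less_complex_def)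
  ultimately show ?thesis by (simp add: zero_le_mult_iff)
qed

definition psd_trace_one :: "nat \<Rightarrow> complex mat \<Rightarrow> bool" where
  "psd_trace_one n M \<longleftrightarrow> M \<in> carrier_mat n n \<and>
     (\<forall>v\<in>carrier_vec n. 0 \<le> Re (conjugate v \<bullet> (M *\<^sub>v v))) \<and> Re (mtrace M) = 1"

lemma density_mat_imp_psd_trace_one: "density_mat n M \<Longrightarrow> psd_trace_one n M"
  unfolding density_mat_def psd_trace_one_def by auto

lemma Re_sum_list: "Re (sum_list xs) = sum_list (map Re xs)"
  by (induct xs) auto

lemma psd_trace_one_eigenvalues:
  assumes "psd_trace_one n M"
  obtains ys where "length ys = n" "\<forall>y\<in>set ys. 0 \<le> y" "sum_list ys = 1"
    "vN_entropy M = (\<Sum>y\<leftarrow>ys. eta y)"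
proof -
  have M: "M \<in> carrier_mat n n" and psd: "\<forall>v\<in>carrier_vec n. 0 \<le> Re (conjugate v \<bullet> (M *\<^sub>v v))"
    and tr: "Re (mtrace M) = 1" using assms unfolding psd_trace_one_def by auto
  obtain as where l: "length as = n" and c: "char_poly M = (\<Prod>b\<leftarrow>as. [:- b, 1:])"
    and s: "sum_list as = mtrace M"
    using eigenvalue_list_sum_eq_mtrace[OF M] by blast
  have "\<forall>y\<in>set (map Re as). 0 \<le> y"
    using eigenvalue_Re_nonneg[OF M psd] c roots_prod_list_linear by auto
  moreover have "sum_list (map Re as) = 1" using s tr Re_sum_list by metis
  moreover have "vN_entropy M = (\<Sum>y\<leftarrow>map Re as. eta y)"
    using vN_entropy_char_poly_linear[OF c] by (simp add: o_def)
  ultimately show ?thesis using that[of "map Re as"] l by simp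
qed

lemma vN_entropy_nonneg: "psd_trace_one n M \<Longrightarrow> 0 \<le> vN_entropy M"
  by (metis psd_trace_one_eigenvalues sum_list_eta_nonneg)

lemma vN_entropy_le_log_dim: "psd_trace_one n M \<Longrightarrow> vN_entropy M \<le> log 2 (real n)"
  by (metis psd_trace_one_eigenvalues sum_list_eta_le_log_length)

lemma holevo_le_log_dim:
  assumes "psd_trace_one d avg" and "\<forall>k<n. psd_trace_one d (\<sigma> k)" and "\<forall>k<n. 0 \<le> p k"
  shows "holevo n p \<sigma> avg \<le> log 2 (real d)"
proof -
  have "0 \<le> (\<Sum>k<n. p k * vN_entropy (\<sigma> k))"
    using assms(2,3) vN_entropy_nonneg by (intro sum_nonneg mult_nonneg_nonneg) auto
  then show ?thesis using vN_entropy_le_log_dim[OF assms(1)] unfolding holevo_def by linarith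
qed

lemma quadratic_form_eq_sum:
  assumes "M \<in> carrier_mat n n" "v \<in> carrier_vec n"
  shows "conjugate v \<bullet> (M *\<^sub>v v) = (\<Sum>i<n. \<Sum>j<n. cnj (v$i) * M$$(i,j) * v$j)"
  using assms by (auto simp: scalar_prod_def sum_distrib_left mult.assoc atLeast0LessThan intro!: sum.cong)

lemma psd_trace_one_ens_avg:
  assumes st: "\<forall>k<n. psd_trace_one d (\<rho> k)" and p: "\<forall>k<n. 0 \<le> p k" and ps: "(\<Sum>k<n. p k) = 1"
  shows "psd_trace_one d (ens_avg d n p \<rho>)"
proof -
  have E: "ens_avg d n p \<rho> \<in> carrier_mat d d" by (simp add: ens_avg_def)
  have \<rho>: "\<rho> k \<in> carrier_mat d d" if "k < n" for k using st that by (simp add: psd_trace_one_def)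
  have "0 \<le> Re (conjugate v \<bullet> (ens_avg d n p \<rho> *\<^sub>v v))" if v: "v \<in> carrier_vec d" for v
  proof -
    have "conjugate v \<bullet> (ens_avg d n p \<rho> *\<^sub>v v)
        = (\<Sum>k<n. complex_of_real (p k) * (\<Sum>i<d. \<Sum>j<d. cnj (v$i) * \<rho> k $$ (i,j) * v$j))"
      unfolding quadratic_form_eq_sum[OF E v]
      by (simp add: ens_avg_def sum_distrib_left sum_distrib_right mult_ac sum.swap[of _ "{..<n}"])
    also have "\<dots> = (\<Sum>k<n. complex_of_real (p k) * (conjugate v \<bullet> (\<rho> k *\<^sub>v v)))"
      using quadratic_form_eq_sum[OF \<rho> v] by simp
    finally show ?thesis
      using st p v by (auto simp: Re_sum psd_trace_one_def intro!: sum_nonneg)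
  qed
  moreover have "Re (mtrace (ens_avg d n p \<rho>)) = 1"
  proof -
    have "mtrace (ens_avg d n p \<rho>) = (\<Sum>k<n. complex_of_real (p k) * mtrace (\<rho> k))"
      using \<rho> by (simp add: mtrace_def ens_avg_def sum_distrib_left sum.swap[of _ "{..<n}"])
        (intro sum.cong refl, auto)
    then have "Re (mtrace (ens_avg d n p \<rho>)) = (\<Sum>k<n. p k * Re (mtrace (\<rho> k)))"
      by (simp add: Re_sum)
    also have "\<dots> = (\<Sum>k<n. p k)" using st by (simp add: psd_trace_one_def)
    finally show ?thesis using ps by simp
  qed
  ultimately show ?thesis using E unfolding psd_trace_one_def by auto
qed

lemma sum_lessThan_mult:
  fixes g :: "nat \<Rightarrow> 'a::comm_monoid_add"
  shows "(\<Sum>i<a*b. g i) = (\<Sum>i<a. \<Sum>j<b. g (i*b+j))"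
proof -
  have "(\<Sum>i<a*b. g i) = (\<Sum>i<a. sum g {i*b..<i*b+b})" using sum.nat_group[of g b a] by simp
  also have "\<dots> = (\<Sum>i<a. \<Sum>j<b. g (i*b+j))"
  proof (rule sum.cong[OF refl])
    fix i
    show "sum g {i*b..<i*b+b} = (\<Sum>j<b. g (i*b+j))"
      using sum.shift_bounds_nat_ivl[of g 0 "i*b" b] by (simp add: atLeast0LessThan add.commute)
  qed
  finally show ?thesis .
qed

lemma mult_add_less_mult:
  assumes "a < (n::nat)" "b < m"
  shows "a * m + b < n * m"
proof -
  have "a * m + b < (a + 1) * m" using assms(2) by simp
  also have "\<dots> \<le> n * m" using assms(1) by (intro mult_right_mono) auto
  finally show ?thesis .
qed

(* w is the partial inner product of v with the environment state e. *)
lemma quadratic_form_kron_ket_bra: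
  fixes \<rho> :: "complex mat"
  assumes r: "\<rho> \<in> carrier_mat d d" and e: "e \<in> carrier_vec dE" and v: "v \<in> carrier_vec (d*dE)"
  defines "w \<equiv> vec d (\<lambda>c. \<Sum>f<dE. cnj (e$f) * v$(c*dE+f))"
  shows "conjugate v \<bullet> (kron \<rho> (ket_bra e) *\<^sub>v v) = conjugate w \<bullet> (\<rho> *\<^sub>v w)"
proof -
  have K: "kron \<rho> (ket_bra e) \<in> carrier_mat (d*dE) (d*dE)" using r e by (simp add: kron_def ket_bra_def)
  have w: "w \<in> carrier_vec d" unfolding w_def by simp
  have "conjugate v \<bullet> (kron \<rho> (ket_bra e) *\<^sub>v v)
     = (\<Sum>a<d. \<Sum>b<dE. \<Sum>c<d. \<Sum>f<dE. cnj (v$(a*dE+b)) * (\<rho>$$(a,c) * (e$b * cnj (e$f))) * v$(c*dE+f))"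
    unfolding quadratic_form_eq_sum[OF K v] sum_lessThan_mult
    using r e mult_add_less_mult by (intro sum.cong refl) (simp add: kron_def ket_bra_def)
  also have "\<dots> = conjugate w \<bullet> (\<rho> *\<^sub>v w)"
    unfolding quadratic_form_eq_sum[OF r w] unfolding w_def
    by (simp add: sum_distrib_left sum_distrib_right mult_ac) (rule sum.cong[OF refl], rule sum.swap)
  finally show ?thesis .
qed

lemma quadratic_form_ptrace_second:
  fixes M :: "complex mat"
  assumes M: "M \<in> carrier_mat (a*b) (a*b)" and v: "v \<in> carrier_vec a"
  defines "w k \<equiv> vec (a*b) (\<lambda>t. if t mod b = k then v$(t div b) else 0)"
  shows "conjugate v \<bullet> (ptrace_second a b M *\<^sub>v v) = (\<Sum>k<b. conjugate (w k) \<bullet> (M *\<^sub>v w k))"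
proof -
  have P: "ptrace_second a b M \<in> carrier_mat a a" by (simp add: ptrace_second_def)
  have "conjugate v \<bullet> (ptrace_second a b M *\<^sub>v v)
      = (\<Sum>k<b. \<Sum>i<a. \<Sum>j<a. cnj (v$i) * M $$ (i*b+k, j*b+k) * v$j)"
    unfolding quadratic_form_eq_sum[OF P v]
    by (simp add: ptrace_second_def sum_distrib_left sum_distrib_right sum.swap[of _ "{..<b}"])
  also have "\<dots> = (\<Sum>k<b. conjugate (w k) \<bullet> (M *\<^sub>v w k))"
  proof (rule sum.cong[OF refl])
    fix k assume k: "k \<in> {..<b}"
    have w: "w k \<in> carrier_vec (a*b)" unfolding w_def by simp
    have "conjugate (w k) \<bullet> (M *\<^sub>v w k)
        = (\<Sum>i<a. \<Sum>k1<b. \<Sum>j<a. \<Sum>k2<b.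
             (if k1 = k then cnj (v$i) else 0) * M$$(i*b+k1,j*b+k2) * (if k2 = k then v$j else 0))"
      unfolding quadratic_form_eq_sum[OF M w] sum_lessThan_mult
      using mult_add_less_mult by (intro sum.cong refl) (simp add: w_def)
    also have "\<dots> = (\<Sum>i<a. \<Sum>j<a. cnj (v$i) * M $$ (i*b+k, j*b+k) * v$j)"
    proof -
      have l: "(if P then x else 0) * y = (if P then x * y else (0::complex))"
        and r: "x * (if P then y else 0) = (if P then x * y else (0::complex))"
        and s: "(\<Sum>j\<in>A. if P then f j else 0) = (if P then sum f A else 0)"
        for P x y and f :: "nat \<Rightarrow> complex" and A by simp_all
      show ?thesis
        using k by (simp only: l r s sum.delta sum.delta' finite_lessThan lessThan_iff if_True)
    qed
    finally show "(\<Sum>i<a. \<Sum>j<a. cnj (v$i) * M $$ (i*b+k, j*b+k) * v$j) = conjugate (w k) \<bullet> (M *\<^sub>v w k)"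
      by simp
  qed
  finally show ?thesis .
qed

lemma adj_carrier_mat: "U \<in> carrier_mat n m \<Longrightarrow> adj U \<in> carrier_mat m n"
  by (simp add: adj_def)

lemma quadratic_form_congruence:
  fixes U X :: "complex mat"
  assumes U: "U \<in> carrier_mat n n" and X: "X \<in> carrier_mat n n" and v: "v \<in> carrier_vec n"
  shows "conjugate v \<bullet> ((U * X * adj U) *\<^sub>v v) = conjugate (adj U *\<^sub>v v) \<bullet> (X *\<^sub>v (adj U *\<^sub>v v))"
proof -
  have A: "adj U \<in> carrier_mat n n" using adj_carrier_mat[OF U] .
  have "(U * X * adj U) *\<^sub>v v = (U * X) *\<^sub>v (adj U *\<^sub>v v)"
    using U X A v by (intro assoc_mult_mat_vec) auto
  also have "\<dots> = U *\<^sub>v (X *\<^sub>v (adj U *\<^sub>v v))"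
    using U X A v by (intro assoc_mult_mat_vec) auto
  finally have "(U * X * adj U) *\<^sub>v v = U *\<^sub>v (X *\<^sub>v (adj U *\<^sub>v v))" .
  moreover have "conjugate v \<bullet> (U *\<^sub>v z) = conjugate (adj U *\<^sub>v v) \<bullet> z" if "z \<in> carrier_vec n" for z
    using U v that
    by (simp add: scalar_prod_def adj_def sum_distrib_left sum_distrib_right mult_ac atLeast0LessThan)
       (rule sum.swap)
  ultimately show ?thesis using X A v by simp
qed

lemma mtrace_unitary_conj:
  fixes U X :: "complex mat"
  assumes U: "unitary_mat n U" and X: "X \<in> carrier_mat n n"
  shows "mtrace (U * X * adj U) = mtrace X"
proof -
  have Uc: "U \<in> carrier_mat n n" and UU: "adj U * U = 1\<^sub>m n" using U unfolding unitary_mat_def by auto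
  have A: "adj U \<in> carrier_mat n n" using adj_carrier_mat[OF Uc] .
  have "mtrace ((U * X) * adj U) = mtrace (adj U * (U * X))" using Uc X A by (intro mtrace_mult_comm) auto
  also have "adj U * (U * X) = (adj U * U) * X" using Uc X A by (simp add: assoc_mult_mat)
  finally show ?thesis using UU X by simp
qed

lemma mtrace_ptrace_second:
  "M \<in> carrier_mat (a*b) (a*b) \<Longrightarrow> mtrace (ptrace_second a b M) = mtrace M"
  by (simp add: mtrace_def ptrace_second_def sum_lessThan_mult)

lemma mtrace_kron_ket_bra:
  fixes \<rho> :: "complex mat"
  assumes "\<rho> \<in> carrier_mat d d" and "e \<in> carrier_vec dE"
  shows "mtrace (kron \<rho> (ket_bra e)) = mtrace \<rho> * (\<Sum>b<dE. e$b * cnj (e$b))"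
  using assms mult_add_less_mult
  by (simp add: mtrace_def kron_def ket_bra_def sum_lessThan_mult sum_distrib_left sum_distrib_right mult_ac)
     (rule sum.swap)

lemma psd_trace_one_chan_out:
  assumes r: "psd_trace_one d \<rho>" and e: "pure_vec dE e" and U: "unitary_mat (d*dE) U"
  shows "psd_trace_one d (chan_out d dE U e \<rho>)"
proof -
  have rc: "\<rho> \<in> carrier_mat d d" and psd: "\<forall>v\<in>carrier_vec d. 0 \<le> Re (conjugate v \<bullet> (\<rho> *\<^sub>v v))"
    and tr: "Re (mtrace \<rho>) = 1" using r unfolding psd_trace_one_def by auto
  have ec: "e \<in> carrier_vec dE" and en: "(\<Sum>i<dE. (cmod (e $ i))\<^sup>2) = 1"
    using e unfolding pure_vec_def by auto
  have Uc: "U \<in> carrier_mat (d*dE) (d*dE)" using U unfolding unitary_mat_def by auto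
  define X where "X = kron \<rho> (ket_bra e)"
  have Xc: "X \<in> carrier_mat (d*dE) (d*dE)" using rc ec by (simp add: X_def kron_def ket_bra_def)
  define Y where "Y = U * X * adj U"
  have Yc: "Y \<in> carrier_mat (d*dE) (d*dE)" using Uc Xc adj_carrier_mat[OF Uc] by (simp add: Y_def)
  have out: "chan_out d dE U e \<rho> = ptrace_second d dE Y"
    by (simp add: chan_out_def dilate_def Y_def X_def)
  have Xpsd: "0 \<le> Re (conjugate u \<bullet> (X *\<^sub>v u))" if "u \<in> carrier_vec (d*dE)" for u
    unfolding X_def quadratic_form_kron_ket_bra[OF rc ec that] using psd by simp
  have Ypsd: "0 \<le> Re (conjugate u \<bullet> (Y *\<^sub>v u))" if "u \<in> carrier_vec (d*dE)" for u
    unfolding Y_def quadratic_form_congruence[OF Uc Xc that]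
    using Xpsd adj_carrier_mat[OF Uc] that by simp
  have "0 \<le> Re (conjugate v \<bullet> (ptrace_second d dE Y *\<^sub>v v))" if "v \<in> carrier_vec d" for v
    unfolding quadratic_form_ptrace_second[OF Yc that] Re_sum by (intro sum_nonneg Ypsd) simp
  moreover have "Re (mtrace (ptrace_second d dE Y)) = 1"
  proof -
    have "(\<Sum>b<dE. e$b * cnj (e$b)) = complex_of_real (\<Sum>b<dE. (cmod (e$b))\<^sup>2)"
      by (simp only: of_real_sum complex_norm_square)
    then show ?thesis
      using mtrace_ptrace_second[OF Yc] mtrace_unitary_conj[OF U Xc] mtrace_kron_ket_bra[OF rc ec] tr en
      unfolding Y_def X_def by simp
  qed
  ultimately show ?thesis unfolding out psd_trace_one_def by (auto simp: ptrace_second_def)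
qed

theorem mainTheorem1:
  fixes dR d dE n :: nat
    and \<Psi> e :: "complex vec" and U :: "complex mat"
    and p :: "nat \<Rightarrow> real" and \<rho> :: "nat \<Rightarrow> complex mat"
    and H_Eve :: real
  assumes pure_RQ: "pure_vec (dR * d) \<Psi>"
    and pure_E: "pure_vec dE e"
    and unitary: "unitary_mat (d * dE) U"
    and p_nonneg: "\<forall>k<n. 0 \<le> p k"
    and p_sum: "(\<Sum>k<n. p k) = 1"
    and states: "\<forall>k<n. density_mat d (\<rho> k)"
    and ensemble: "ens_avg d n p \<rho> = ptrace_first dR d (ket_bra \<Psi>)"
    and convention: "coh_info dR d dE \<Psi> U e =
        holevo n p (\<lambda>k. chan_out d dE U e (\<rho> k)) (chan_out d dE U e (ptrace_first dR d (ket_bra \<Psi>)))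
      - holevo n p (\<lambda>k. env_out d dE U e (\<rho> k)) (env_out d dE U e (ptrace_first dR d (ket_bra \<Psi>)))"
    and eve: "H_Eve \<le> holevo n p (\<lambda>k. env_out d dE U e (\<rho> k)) (env_out d dE U e (ptrace_first dR d (ket_bra \<Psi>)))"
  shows "coh_info dR d dE \<Psi> U e + H_Eve \<le> log 2 (real d)"
proof -
  have \<rho>: "\<forall>k<n. psd_trace_one d (\<rho> k)" using states density_mat_imp_psd_trace_one by blast
  have \<rho>Q: "psd_trace_one d (ptrace_first dR d (ket_bra \<Psi>))"
    using psd_trace_one_ens_avg[OF \<rho> p_nonneg p_sum] ensemble by simp
  have "holevo n p (\<lambda>k. chan_out d dE U e (\<rho> k)) (chan_out d dE U e (ptrace_first dR d (ket_bra \<Psi>)))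
        \<le> log 2 (real d)"
    using \<rho> p_nonneg psd_trace_one_chan_out[OF \<rho>Q pure_E unitary]
      psd_trace_one_chan_out[OF _ pure_E unitary]
    by (intro holevo_le_log_dim) auto
  then show ?thesis using convention eve by linarith
qed

end
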